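(* Let $n\ge 2$ and let $S=[A_0,\dots,A_n]$ be an $n$-pre-kite. If the circumcenter and the incenter of $S$ coincide, then $S$ is a regular $n$-simplex.
   Context: An $n$-simplex is the convex hull of $n+1$ affinely independent points in a Euclidean space. It is an $n$-pre-kite if one of its facets (the $(n-1)$-simplex obtained by deleting one vertex) is a regular $(n-1)$-simplex, i.e. has all edges of equal length. The circumcenter of $S$ is the center of the $(n-1)$-sphere in the affine hull of $S$ passing through all vertices; the incenter is the center of the $(n-1)$-sphere in the affine hull of $S$ touching every facet at a point of that facet's convex hull. $S$ is regular if all its edges have the same length. *)

theory Defs
  imports "HOL-Analysis.Analysis"
begin

definition is_simplex :: "nat \<Rightarrow> (nat \<Rightarrow> 'a::euclidean_space) \<Rightarrow> bool" where
  "is_simplex n A \<longleftrightarrow> inj_on A {0..n} \<and> \<not> affine_dependent (A ` {0..n})"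

definition facet :: "nat \<Rightarrow> (nat \<Rightarrow> 'a::euclidean_space) \<Rightarrow> nat \<Rightarrow> 'a set" where
  "facet n A j = A ` ({0..n} - {j})"

definition equal_edges :: "nat set \<Rightarrow> (nat \<Rightarrow> 'a::euclidean_space) \<Rightarrow> bool" where
  "equal_edges I A \<longleftrightarrow>
     (\<forall>i\<in>I. \<forall>k\<in>I. \<forall>i'\<in>I. \<forall>k'\<in>I. i \<noteq> k \<longrightarrow> i' \<noteq> k' \<longrightarrow>
        dist (A i) (A k) = dist (A i') (A k'))"

definition regular_simplex :: "nat \<Rightarrow> (nat \<Rightarrow> 'a::euclidean_space) \<Rightarrow> bool" where
  "regular_simplex n A \<longleftrightarrow> is_simplex n A \<and> equal_edges {0..n} A"

definition pre_kite :: "nat \<Rightarrow> (nat \<Rightarrow> 'a::euclidean_space) \<Rightarrow> bool" where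
  "pre_kite n A \<longleftrightarrow> is_simplex n A \<and> (\<exists>j\<in>{0..n}. equal_edges ({0..n} - {j}) A)"

definition is_circumcenter :: "nat \<Rightarrow> (nat \<Rightarrow> 'a::euclidean_space) \<Rightarrow> 'a \<Rightarrow> bool" where
  "is_circumcenter n A C \<longleftrightarrow> C \<in> affine hull (A ` {0..n}) \<and>
     (\<exists>R. \<forall>i\<in>{0..n}. dist C (A i) = R)"

text \<open>Incenter: centre of a sphere (radius r > 0) in the affine hull touching every
  facet at a point of the facet's convex hull, i.e. the facet's affine hull lies outside
  the open ball and the sphere meets the facet's convex hull.\<close>
definition is_incenter :: "nat \<Rightarrow> (nat \<Rightarrow> 'a::euclidean_space) \<Rightarrow> 'a \<Rightarrow> bool" where
  "is_incenter n A I \<longleftrightarrow> I \<in> affine hull (A ` {0..n}) \<and>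
     (\<exists>r>0. \<forall>j\<in>{0..n}.
        (\<exists>p\<in>convex hull (facet n A j). dist I p = r) \<and>
        (\<forall>q\<in>affine hull (facet n A j). r \<le> dist I q))"

end

theory Submission
  imports Defs
begin

text \<open>Work with the Gram matrix G k l = (A k - X) \<bullet> (A l - X). The inscribed sphere
  touches facet j at the foot p of X on its affine hull, so p - X is orthogonal to the facet
  and (A m - X) \<bullet> (p - X) = r^2 for every vertex A m of the facet: the barycentric
  coordinates of p are a nonnegative solution of a linear system in G. As X is also the
  circumcenter, G has constant diagonal, and on the regular facet its off-diagonal entries
  are constant too. After subtracting that constant, the systems of the regular facet and
  of the facets through the apex A j0 have arrowhead matrices; solving them forces the
  entries G j0 i to the same constant, i.e. every edge through the apex has the common
  edge length.\<close>

text \<open>For the Gram matrix G of the vertices relative to X, the weights l are the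
  barycentric coordinates of the point where the inscribed sphere of radius sqrt t
  touches the facet K.\<close>

definition convex_level :: "'i set \<Rightarrow> ('i \<Rightarrow> 'i \<Rightarrow> real) \<Rightarrow> real \<Rightarrow> bool" where
  "convex_level K G t \<longleftrightarrow>
     (\<exists>l. (\<forall>k\<in>K. 0 \<le> l k) \<and> sum l K = 1 \<and> (\<forall>m\<in>K. (\<Sum>k\<in>K. l k * G m k) = t))"

lemma convex_level_shift:
  assumes "convex_level K G t"
  shows "convex_level K (\<lambda>k l. G k l - c) (t - c)"
proof -
  obtain l where l: "\<forall>k\<in>K. 0 \<le> l k" "sum l K = 1" "\<forall>m\<in>K. (\<Sum>k\<in>K. l k * G m k) = t"
    using assms unfolding convex_level_def by blast
  have "(\<Sum>k\<in>K. l k * (G m k - c)) = t - c" if "m \<in> K" for m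
    using l that by (simp add: right_diff_distrib sum_subtractf sum_distrib_right[symmetric])
  with l show ?thesis unfolding convex_level_def by blast
qed

subsection \<open>Geometry of the touching points\<close>

lemma affine_closest_point_orthogonal:
  fixes a x y :: "'a::euclidean_space"
  assumes S: "affine S" and "x \<in> S" "y \<in> S" and closest: "\<forall>z\<in>S. dist a x \<le> dist a z"
  shows "inner (a - x) (y - x) = 0"
proof -
  have cvx: "convex S" and cl: "closed S"
    using S by (simp_all add: affine_imp_convex affine_closed)
  have "(1 - (-1)) *\<^sub>R x + (-1) *\<^sub>R y \<in> S"
    using S \<open>x \<in> S\<close> \<open>y \<in> S\<close> unfolding affine_alt by blast
  then have reflected: "2 *\<^sub>R x - y \<in> S" by simp
  have "inner (a - x) (y - x) \<le> 0"
    using any_closest_point_dot[OF cvx cl \<open>x \<in> S\<close> \<open>y \<in> S\<close> closest] .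
  moreover have "inner (a - x) ((2 *\<^sub>R x - y) - x) \<le> 0"
    using any_closest_point_dot[OF cvx cl \<open>x \<in> S\<close> reflected closest] .
  then have "inner (a - x) (y - x) \<ge> 0"
    by (simp add: algebra_simps inner_diff_right scaleR_2)
  ultimately show ?thesis by linarith
qed

lemma convex_hull_image_coeffs:
  fixes A :: "'i \<Rightarrow> 'a::real_vector"
  assumes "finite K" "inj_on A K" "p \<in> convex hull (A ` K)"
  obtains l where "\<forall>k\<in>K. 0 \<le> l k" "sum l K = 1" "p = (\<Sum>k\<in>K. l k *\<^sub>R A k)"
proof -
  obtain u where u: "\<forall>x\<in>A ` K. 0 \<le> u x" "sum u (A ` K) = 1" "(\<Sum>x\<in>A ` K. u x *\<^sub>R x) = p"
    using assms convex_hull_finite[of "A ` K"] by auto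
  show ?thesis
    by (rule that[of "u \<circ> A"]) (use u assms(2) in \<open>simp_all add: sum.reindex\<close>)
qed

lemma touching_point_convex_level:
  fixes A :: "'i \<Rightarrow> 'a::euclidean_space"
  assumes "finite K" "inj_on A K"
    and p: "p \<in> convex hull (A ` K)" "dist X p = r"
    and outside: "\<forall>q\<in>affine hull (A ` K). r \<le> dist X q"
  shows "convex_level K (\<lambda>k l. inner (A k - X) (A l - X)) (r\<^sup>2)"
proof -
  obtain l where l: "\<forall>k\<in>K. 0 \<le> l k" "sum l K = 1" "p = (\<Sum>k\<in>K. l k *\<^sub>R A k)"
    using convex_hull_image_coeffs[OF assms(1,2) p(1)] .
  have "p - X = (\<Sum>k\<in>K. l k *\<^sub>R A k) - (\<Sum>k\<in>K. l k *\<^sub>R X)"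
    using l(2,3) by (simp add: scaleR_sum_left[symmetric])
  then have pX: "p - X = (\<Sum>k\<in>K. l k *\<^sub>R (A k - X))"
    by (simp add: scaleR_diff_right sum_subtractf)
  have p_hull: "p \<in> affine hull (A ` K)"
    using p(1) convex_hull_subset_affine_hull by blast
  have "(\<Sum>k\<in>K. l k * inner (A m - X) (A k - X)) = r\<^sup>2" if "m \<in> K" for m
  proof -
    have "A m \<in> affine hull (A ` K)"
      using that by (intro hull_inc) auto
    then have "inner (X - p) (A m - p) = 0"
      using affine_closest_point_orthogonal[OF affine_affine_hull p_hull] outside p(2) by auto
    then have "inner (A m - X) (p - X) = inner (p - X) (p - X)"
      by (simp add: algebra_simps inner_diff_left inner_diff_right inner_commute)
    also have "\<dots> = r\<^sup>2"
      using p(2) by (simp add: dist_norm norm_minus_commute power2_norm_eq_inner[symmetric])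
    finally show ?thesis
      by (simp add: pX inner_sum_right)
  qed
  with l show ?thesis unfolding convex_level_def by blast
qed

lemma incenter_convex_levels:
  assumes "is_simplex n A" "is_incenter n A X"
  obtains r where
    "\<forall>j\<in>{0..n}. convex_level ({0..n} - {j}) (\<lambda>k l. inner (A k - X) (A l - X)) (r\<^sup>2)"
proof -
  obtain r where r: "\<forall>j\<in>{0..n}. (\<exists>p\<in>convex hull (facet n A j). dist X p = r) \<and>
      (\<forall>q\<in>affine hull (facet n A j). r \<le> dist X q)"
    using assms(2) unfolding is_incenter_def by blast
  have inj: "inj_on A ({0..n} - {j})" for j
    using assms(1) unfolding is_simplex_def by (meson Diff_subset inj_on_subset)
  have "convex_level ({0..n} - {j}) (\<lambda>k l. inner (A k - X) (A l - X)) (r\<^sup>2)"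
    if j: "j \<in> {0..n}" for j
  proof -
    obtain p where "p \<in> convex hull (A ` ({0..n} - {j}))" "dist X p = r"
      and "\<forall>q\<in>affine hull (A ` ({0..n} - {j})). r \<le> dist X q"
      using r[THEN bspec, OF j] unfolding facet_def by blast
    then show ?thesis
      by (intro touching_point_convex_level[OF _ inj]) simp_all
  qed
  then show ?thesis using that by blast
qed

lemma dist_sq_eq_on_sphere:
  fixes X x y :: "'a::real_inner"
  assumes "dist X x = R" "dist X y = R"
  shows "(dist x y)\<^sup>2 = 2 * R\<^sup>2 - 2 * inner (x - X) (y - X)"
  using assms dot_norm_neg[of "x - X" "y - X"]
  by (simp add: dist_norm norm_minus_commute)

subsection \<open>The arrowhead systems\<close>

text \<open>The linear system of a facet through the apex, once the Gram matrix has been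
  normalised to D on the diagonal and 0 between distinct vertices of the regular facet:
  e m is the remaining entry between the apex and vertex m, and mu, nu m are the
  barycentric weights of the apex and of vertex m.\<close>

lemma arrowhead_system_consequences:
  fixes mu D :: real and nu e :: "'i \<Rightarrow> real"
  assumes "finite M" "D > 0" "mu \<ge> 0" and sum_one: "mu + sum nu M = 1"
    and rows: "\<forall>m\<in>M. mu * e m + nu m * D = D / (card M + 1)"
    and apex_row: "mu * D + (\<Sum>m\<in>M. nu m * e m) = D / (card M + 1)"
  shows "sum e M < D \<and> (\<Sum>m\<in>M. (e m)\<^sup>2) = 2 * D * sum e M - (sum e M)\<^sup>2"
proof -
  define s where "s = D / (card M + 1)"
  define E where "E = sum e M"
  define Q where "Q = (\<Sum>m\<in>M. (e m)\<^sup>2)"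
  have s_pos: "s > 0" using \<open>D > 0\<close> by (simp add: s_def)
  have "(\<Sum>m\<in>M. mu * e m + nu m * D) = card M * s"
    using rows by (simp add: s_def)
  then have "mu * E + D * sum nu M = card M * s"
    by (simp add: sum.distrib E_def sum_distrib_left[symmetric]
        sum_distrib_right[symmetric] mult.commute)
  moreover have "sum nu M = 1 - mu" using sum_one by simp
  ultimately have "mu * E + D * (1 - mu) = card M * s" by simp
  then have mu_E: "mu * (D - E) = s"
    by (simp add: s_def field_simps)
  have "mu > 0"
    using mu_E s_pos \<open>mu \<ge> 0\<close> by (metis less_eq_real_def mult_zero_left order.irrefl)
  have "D - E > 0"
    using mu_E s_pos \<open>mu > 0\<close> by (metis zero_less_mult_pos)
  have "(\<Sum>m\<in>M. e m * (mu * e m + nu m * D)) = (\<Sum>m\<in>M. e m * s)"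
    using rows by (intro sum.cong) (simp_all add: s_def)
  also have "\<dots> = s * E"
    by (simp add: E_def sum_distrib_left mult.commute)
  finally have "mu * Q + D * (\<Sum>m\<in>M. nu m * e m) = s * E"
    by (simp add: Q_def power2_eq_square distrib_left sum.distrib sum_distrib_left mult_ac)
  moreover have "(\<Sum>m\<in>M. nu m * e m) = s - mu * D"
    using apex_row[folded s_def] by linarith
  ultimately have "mu * Q + D * (s - mu * D) = s * E" by simp
  then have "mu * (Q - (2 * D * E - E\<^sup>2)) = 0"
    unfolding mu_E[symmetric] by (simp add: algebra_simps power2_eq_square)
  with \<open>mu > 0\<close> \<open>D - E > 0\<close> show ?thesis
    by (simp add: E_def Q_def)
qed

lemma arrowhead_convex_level:
  assumes "finite M" "j0 \<notin> M" "D > 0"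
    and level: "convex_level (insert j0 M) G (D / (card M + 1))"
    and diag: "\<forall>k\<in>insert j0 M. G k k = D"
    and off: "\<forall>k\<in>M. \<forall>l\<in>M. k \<noteq> l \<longrightarrow> G k l = 0"
    and sym: "\<forall>m\<in>M. G m j0 = G j0 m"
  shows "sum (G j0) M < D \<and>
    (\<Sum>m\<in>M. (G j0 m)\<^sup>2) = 2 * D * sum (G j0) M - (sum (G j0) M)\<^sup>2"
proof -
  obtain l where l: "\<forall>k\<in>insert j0 M. 0 \<le> l k" "sum l (insert j0 M) = 1"
    and eqs: "\<forall>m\<in>insert j0 M. (\<Sum>k\<in>insert j0 M. l k * G m k) = D / (card M + 1)"
    using level unfolding convex_level_def by blast
  have row_sum: "(\<Sum>k\<in>M. l k * G m k) = l m * D" if "m \<in> M" for m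
  proof -
    have "(\<Sum>k\<in>M. l k * G m k) = (\<Sum>k\<in>M. if k = m then l m * D else 0)"
      using that diag off by (intro sum.cong) auto
    then show ?thesis using \<open>finite M\<close> that by simp
  qed
  show ?thesis
  proof (rule arrowhead_system_consequences[OF \<open>finite M\<close> \<open>D > 0\<close>, of "l j0" l])
    show "0 \<le> l j0" "l j0 + sum l M = 1"
      using l \<open>finite M\<close> \<open>j0 \<notin> M\<close> by auto
    show "\<forall>m\<in>M. l j0 * G j0 m + l m * D = D / (card M + 1)"
      using eqs row_sum sym \<open>finite M\<close> \<open>j0 \<notin> M\<close> by auto
    show "l j0 * D + (\<Sum>m\<in>M. l m * G j0 m) = D / (card M + 1)"
      using eqs diag \<open>finite M\<close> \<open>j0 \<notin> M\<close> by auto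
  qed
qed

lemma convex_level_scalar_matrix:
  assumes "finite J" "convex_level J G t"
    and "\<forall>k\<in>J. G k k = D" "\<forall>k\<in>J. \<forall>l\<in>J. k \<noteq> l \<longrightarrow> G k l = 0"
  shows "t = D / card J"
proof -
  obtain l where l: "sum l J = 1" "\<forall>m\<in>J. (\<Sum>k\<in>J. l k * G m k) = t"
    using assms(2) unfolding convex_level_def by blast
  have "l m * D = t" if "m \<in> J" for m
  proof -
    have "(\<Sum>k\<in>J. l k * G m k) = (\<Sum>k\<in>J. if k = m then l m * D else 0)"
      using that assms(3,4) by (intro sum.cong) auto
    then show ?thesis using l(2) assms(1) that by simp
  qed
  then have "(\<Sum>m\<in>J. l m * D) = card J * t" by simp
  then have "D = card J * t"
    using l(1) by (simp add: sum_distrib_right[symmetric])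
  moreover have "J \<noteq> {}" using l(1) by auto
  ultimately show ?thesis using assms(1) by simp
qed

lemma sum_squares_less_square_sum:
  fixes e :: "'i \<Rightarrow> real"
  assumes "finite J" "card J \<ge> 2" "\<forall>i\<in>J. e i > 0"
  shows "(\<Sum>m\<in>J. (e m)\<^sup>2) < (sum e J)\<^sup>2"
proof -
  have less: "e i < sum e J" if "i \<in> J" for i
  proof -
    have "card (J - {i}) \<ge> 1"
      using assms(1,2) that by (simp add: card_Diff_singleton)
    then have "J - {i} \<noteq> {}" by (cases "J - {i} = {}") auto
    then have "sum e (J - {i}) > 0"
      using assms by (intro sum_pos) auto
    then show ?thesis
      using that assms(1) by (simp add: sum.remove)
  qed
  have "J \<noteq> {}" using assms(2) by auto
  then have "(\<Sum>m\<in>J. (e m)\<^sup>2) < (\<Sum>m\<in>J. e m * sum e J)"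
    using assms less by (intro sum_strict_mono) (auto simp: power2_eq_square)
  also have "\<dots> = (sum e J)\<^sup>2"
    by (simp add: sum_distrib_right[symmetric] power2_eq_square)
  finally show ?thesis .
qed

lemma arrowhead_constraints_imp_zero:
  fixes e :: "'i \<Rightarrow> real"
  assumes fin: "finite J" and card: "card J \<ge> 2" and "D > 0"
    and bound: "\<forall>i\<in>J. sum e J - e i < D"
    and quad: "\<forall>i\<in>J. (\<Sum>m\<in>J. (e m)\<^sup>2) - (e i)\<^sup>2 =
                       2 * D * (sum e J - e i) - (sum e J - e i)\<^sup>2"
  shows "\<forall>i\<in>J. e i = 0"
proof -
  define E where "E = sum e J"
  define Q where "Q = (\<Sum>m\<in>J. (e m)\<^sup>2)"
  have bound': "E - e i < D" and quad': "Q - (e i)\<^sup>2 = 2 * D * (E - e i) - (E - e i)\<^sup>2"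
    if "i \<in> J" for i
    using bound quad that unfolding E_def Q_def by blast+
  obtain i0 where "i0 \<in> J" using card by fastforce
  define K where "K = 2 * D * E - E\<^sup>2 - Q"
  have linear: "e i * (2 * D - 2 * E) = K" if "i \<in> J" for i
    using quad'[OF that] unfolding K_def by (simp add: algebra_simps power2_eq_square)
  show ?thesis
  proof (cases "E = D")
    case True
    then have "\<forall>i\<in>J. e i > 0" using bound' by simp
    then have "Q < E\<^sup>2"
      using sum_squares_less_square_sum[OF fin card] by (simp add: Q_def E_def)
    moreover have "Q = E\<^sup>2"
      using linear[OF \<open>i0 \<in> J\<close>] True by (simp add: K_def power2_eq_square)
    ultimately show ?thesis by simp
  next
    case False
    define c where "c = K / (2 * D - 2 * E)"
    have const: "\<forall>i\<in>J. e i = c"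
      using linear False by (auto simp: c_def field_simps)
    define k where "k = real (card J)"
    have "k \<ge> 2" using card by (simp add: k_def)
    have E: "E = k * c" and Q: "Q = k * c\<^sup>2"
      using const by (simp_all add: E_def Q_def k_def)
    have "Q - c\<^sup>2 = 2 * D * (E - c) - (E - c)\<^sup>2"
      using quad' \<open>i0 \<in> J\<close> const by auto
    then have "(k - 1) * (c * (k * c - 2 * D)) = 0"
      unfolding E Q by (simp add: algebra_simps power2_eq_square)
    then have "c = 0 \<or> k * c = 2 * D" using \<open>k \<ge> 2\<close> by auto
    moreover have "k * c \<noteq> 2 * D"
    proof
      assume "k * c = 2 * D"
      have "(k - 1) * c < D"
        using bound' \<open>i0 \<in> J\<close> const E by (simp add: algebra_simps)
      from \<open>k * c = 2 * D\<close> have "k * ((k - 1) * c) = (k - 1) * (2 * D)"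
        by (simp add: algebra_simps)
      moreover have "k * ((k - 1) * c) < k * D"
        using \<open>(k - 1) * c < D\<close> \<open>k \<ge> 2\<close> by simp
      ultimately have "(k - 2) * D < 0" by (simp add: algebra_simps)
      with \<open>k \<ge> 2\<close> \<open>D > 0\<close> show False by (simp add: mult_less_0_iff)
    qed
    ultimately show ?thesis using const by simp
  qed
qed

lemma kite_gram_regular:
  assumes "finite J" "card J \<ge> 2" "j0 \<notin> J" "D > 0"
    and diag: "\<forall>k\<in>insert j0 J. G k k = D"
    and off: "\<forall>k\<in>J. \<forall>l\<in>J. k \<noteq> l \<longrightarrow> G k l = 0"
    and sym: "\<forall>m\<in>J. G m j0 = G j0 m"
    and base_level: "convex_level J G t"
    and apex_levels: "\<forall>i\<in>J. convex_level (insert j0 (J - {i})) G t"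
  shows "\<forall>i\<in>J. G j0 i = 0"
proof (rule arrowhead_constraints_imp_zero[OF \<open>finite J\<close> \<open>card J \<ge> 2\<close> \<open>D > 0\<close>]; intro ballI)
  fix i assume "i \<in> J"
  define M where "M = J - {i}"
  have "t = D / card J"
    using convex_level_scalar_matrix[OF \<open>finite J\<close> base_level] diag off by simp
  also have "card J = card M + 1"
    using \<open>finite J\<close> \<open>i \<in> J\<close> \<open>card J \<ge> 2\<close> by (simp add: M_def card_Diff_singleton)
  finally have "convex_level (insert j0 M) G (D / (card M + 1))"
    using apex_levels \<open>i \<in> J\<close> by (simp add: M_def)
  moreover have "sum (G j0) M = sum (G j0) J - G j0 i"
    "(\<Sum>m\<in>M. (G j0 m)\<^sup>2) = (\<Sum>m\<in>J. (G j0 m)\<^sup>2) - (G j0 i)\<^sup>2"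
    using \<open>finite J\<close> \<open>i \<in> J\<close> by (simp_all add: M_def sum_diff1)
  ultimately show "sum (G j0) J - G j0 i < D"
    "(\<Sum>m\<in>J. (G j0 m)\<^sup>2) - (G j0 i)\<^sup>2 =
       2 * D * (sum (G j0) J - G j0 i) - (sum (G j0) J - G j0 i)\<^sup>2"
    using arrowhead_convex_level[of M j0 D G] assms by (auto simp: M_def)
qed

subsection \<open>Edge lengths\<close>

lemma equal_edges_common_length:
  assumes "equal_edges I A" "inj_on A I" "k0 \<in> I" "l0 \<in> I" "k0 \<noteq> l0"
  obtains d where "d > 0" "\<forall>k\<in>I. \<forall>l\<in>I. k \<noteq> l \<longrightarrow> dist (A k) (A l) = d"
proof
  show "dist (A k0) (A l0) > 0"
    using assms(2-5) by (auto dest: inj_onD)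
  show "\<forall>k\<in>I. \<forall>l\<in>I. k \<noteq> l \<longrightarrow> dist (A k) (A l) = dist (A k0) (A l0)"
    using assms(1,3-5) unfolding equal_edges_def by blast
qed

lemma equal_edges_apex:
  assumes base: "\<forall>k\<in>I - {j}. \<forall>l\<in>I - {j}. k \<noteq> l \<longrightarrow> dist (A k) (A l) = d"
    and apex: "\<forall>i\<in>I - {j}. dist (A j) (A i) = d"
  shows "equal_edges I A"
proof -
  have "dist (A k) (A l) = d" if "k \<in> I" "l \<in> I" "k \<noteq> l" for k l
    using base apex that by (cases "k = j"; cases "l = j") (auto simp: dist_commute)
  then show ?thesis unfolding equal_edges_def by metis
qed

lemma common_center_apex_edges:
  fixes A :: "nat \<Rightarrow> 'a::euclidean_space"
  assumes simplex: "is_simplex n A" and "is_circumcenter n A X" "is_incenter n A X"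
    and j0: "j0 \<in> {0..n}" and "n \<ge> 2" and "d > 0"
    and base_edges: "\<forall>k\<in>{0..n} - {j0}. \<forall>l\<in>{0..n} - {j0}. k \<noteq> l \<longrightarrow> dist (A k) (A l) = d"
  shows "\<forall>i\<in>{0..n} - {j0}. dist (A j0) (A i) = d"
proof -
  define J where "J = {0..n} - {j0}"
  obtain R where R: "\<forall>i\<in>{0..n}. dist X (A i) = R"
    using assms(2) unfolding is_circumcenter_def by blast
  obtain r where levels:
    "\<forall>j\<in>{0..n}. convex_level ({0..n} - {j}) (\<lambda>k l. inner (A k - X) (A l - X)) (r\<^sup>2)"
    using incenter_convex_levels[OF simplex assms(3)] .
  define c where "c = R\<^sup>2 - d\<^sup>2 / 2"
  define G where "G = (\<lambda>k l. inner (A k - X) (A l - X) - c)"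
  have G_dist: "G k l = (d\<^sup>2 - (dist (A k) (A l))\<^sup>2) / 2" if "k \<in> {0..n}" "l \<in> {0..n}" for k l
    using dist_sq_eq_on_sphere[of X "A k" R "A l"] R that by (simp add: G_def c_def)
  have shifted_levels: "convex_level ({0..n} - {j}) G (r\<^sup>2 - c)" if "j \<in> {0..n}" for j
    using convex_level_shift[OF levels[THEN bspec, OF that]] by (simp add: G_def)
  have "insert j0 (J - {i}) = {0..n} - {i}" if "i \<in> J" for i
    using that j0 by (auto simp: J_def)
  then have "\<forall>i\<in>J. G j0 i = 0"
    using \<open>n \<ge> 2\<close> \<open>d > 0\<close> j0 base_edges shifted_levels
    by (intro kite_gram_regular[of J j0 "d\<^sup>2 / 2" G "r\<^sup>2 - c"])
       (simp_all add: J_def G_dist dist_commute)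
  then show ?thesis
    using j0 \<open>d > 0\<close> by (simp add: J_def G_dist)
qed

theorem theorem6p3:
  fixes A :: "nat \<Rightarrow> 'a::euclidean_space" and n :: nat and X :: 'a
  assumes "n \<ge> 2"
    and "pre_kite n A"
    and "is_circumcenter n A X"
    and "is_incenter n A X"
  shows "regular_simplex n A"
proof -
  obtain j0 where j0: "j0 \<in> {0..n}" and regular_facet: "equal_edges ({0..n} - {j0}) A"
    and simplex: "is_simplex n A"
    using assms(2) unfolding pre_kite_def by blast
  define J where "J = {0..n} - {j0}"
  have "card J = n"
    using j0 by (simp add: J_def)
  then obtain k0 l0 where "k0 \<in> J" "l0 \<in> J" "k0 \<noteq> l0"
    using \<open>n \<ge> 2\<close> by (metis card_le_Suc0_iff_eq not_less_eq_eq numeral_2_eq_2 finite_Diff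
        finite_atLeastAtMost J_def)
  moreover have "inj_on A J"
    using simplex unfolding is_simplex_def J_def by (meson Diff_subset inj_on_subset)
  ultimately obtain d where "d > 0"
    and base_edges: "\<forall>k\<in>J. \<forall>l\<in>J. k \<noteq> l \<longrightarrow> dist (A k) (A l) = d"
    using equal_edges_common_length regular_facet[folded J_def] by metis
  then have "\<forall>i\<in>J. dist (A j0) (A i) = d"
    using common_center_apex_edges[OF simplex assms(3,4) j0 \<open>n \<ge> 2\<close>] by (simp add: J_def)
  then show ?thesis
    using simplex equal_edges_apex[OF base_edges[unfolded J_def]]
    unfolding regular_simplex_def J_def by blast
qed

end
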